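(* For all $N\ge1$ and $1\le k\le N$, $E[X_{k,N}]=E[Y_{k,N}]=\prod_{j=k+1}^N\big(1-\tfrac rj\big)$.
   Context: Fix $r\in(0,1)$. Multitype Yule process: at time $0$ a single individual of type $1$ is born; no deaths; each individual independently gives birth at rate $1$; a newborn has, independently, its parent's type with probability $1-r$ and otherwise a brand-new type. Individuals are numbered in order of birth (the initial one is the 1st); if the $k$-th individual born has a type different from its parent, that type is called type $k$. $T_N$ is the time the population reaches size $N$; $X_{k,N}$ is the fraction of individuals at time $T_N$ with type in $\{1,\dots,k\}$; $V_{k,N}$ is the fraction, among those individuals at time $T_N$ with type in $\{1,\dots,k\}$, that have type $k$. $W_k=\lim_{N\to\infty}V_{k,N}$ (exists a.s.); the $W_k$ are independent, $W_1=1$, and for $k\ge2$, $P(W_k>0)=r$ and given $W_k>0$, $W_k\sim\mathrm{Beta}(1,k-1)$. $Y_{N,N}=1$ and $Y_{k,N}=\prod_{j=k+1}^N(1-W_j)$ for $1\le k\le N-1$. *)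

theory Defs
  imports "HOL-Probability.Probability"
begin

text \<open>Embedded jump chain of the multitype Yule process. A state is the list of
types of the individuals, in order of birth (entry i is the type of the (i+1)-th
individual). Types are labelled by the birth index of the founding individual.
When the population has size n, the next birth comes from a uniformly chosen
individual (all individuals give birth at rate 1); the newborn (individual n+1)
keeps the parent's type with probability 1-r and otherwise gets the new type n+1.\<close>

definition yule_step :: "real \<Rightarrow> nat list \<Rightarrow> nat list pmf" where
  "yule_step r ts =
     pmf_of_set {0..<length ts} \<bind> (\<lambda>i.
     bernoulli_pmf r \<bind> (\<lambda>new.
     return_pmf (ts @ [if new then length ts + 1 else ts ! i])))"

text \<open>State after n births, i.e. at time T_(n+1) (population size n+1).\<close>
fun yule_chain :: "real \<Rightarrow> nat \<Rightarrow> nat list pmf" where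
  "yule_chain r 0 = return_pmf [1]"
| "yule_chain r (Suc n) = yule_chain r n \<bind> yule_step r"

text \<open>Population at time T_N (N \<ge> 1).\<close>
definition yule_at :: "real \<Rightarrow> nat \<Rightarrow> nat list pmf" where
  "yule_at r N = yule_chain r (N - 1)"

definition Xfrac :: "nat \<Rightarrow> nat list \<Rightarrow> real" where
  "Xfrac k ts = real (length (filter (\<lambda>t. 1 \<le> t \<and> t \<le> k) ts)) / real (length ts)"

text \<open>Beta(1, j-1) distribution on [0,1] (density (j-1)(1-x)^(j-2)), j \<ge> 2.\<close>
definition beta1 :: "nat \<Rightarrow> real measure" where
  "beta1 j = density lborel
     (\<lambda>x. ennreal (indicator {0..1} x * (real j - 1) * (1 - x) ^ (j - 2)))"

definition W_law :: "real \<Rightarrow> nat \<Rightarrow> real measure" where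
  "W_law r j = distr (measure_pmf (bernoulli_pmf r) \<Otimes>\<^sub>M beta1 j) borel
                  (\<lambda>(b, u). if b then u else 0)"

definition W_joint :: "real \<Rightarrow> nat \<Rightarrow> nat \<Rightarrow> (nat \<Rightarrow> real) measure" where
  "W_joint r k N = (\<Pi>\<^sub>M j\<in>{k+1..N}. W_law r j)"

definition Yprod :: "nat \<Rightarrow> nat \<Rightarrow> (nat \<Rightarrow> real) \<Rightarrow> real" where
  "Yprod k N w = (\<Prod>j\<in>{k+1..N}. 1 - w j)"

end

theory Submission
  imports Defs
begin

text \<open>
  When the population has size \<open>L \<ge> k\<close>, the newborn has a type in \<open>{1..k}\<close> exactly when
  its parent does (probability \<open>X\<close>, the parent being uniform) and it inherits that type
  (probability \<open>1 - r\<close>); a new type \<open>L + 1\<close> exceeds \<open>k\<close>.  Hence one birth multiplies the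
  expected fraction by \<open>(L + (1 - r)) / (L + 1) = 1 - r / (L + 1)\<close>, and starting from
  \<open>X\<^sub>k\<^sub>,\<^sub>k = 1\<close> gives the product.  On the other side the \<open>W\<^sub>j\<close> are independent and
  \<open>E[1 - W\<^sub>j] = (1 - r) + r (j - 1) / j = 1 - r / j\<close>, because \<open>E[1 - W] = (j - 1) / j\<close> for
  \<open>W \<sim> Beta(1, j - 1)\<close>.
\<close>

lemma integral_bind_pmf_bounded:
  fixes f :: "'b \<Rightarrow> real"
  assumes "\<And>x. \<bar>f x\<bar> \<le> B"
  shows "measure_pmf.expectation (p \<bind> q) f
           = measure_pmf.expectation p (\<lambda>x. measure_pmf.expectation (q x) f)"
  unfolding measure_pmf_bind
  by (rule integral_bind[where K = "count_space UNIV" and B = B and B' = 1])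
     (use assms measurable_measure_pmf[of q] in
       \<open>auto simp: measure_pmf.emeasure_space_1 measure_pmf.finite_measure_axioms\<close>)

lemma set_pmf_yule_chain:
  assumes "ts \<in> set_pmf (yule_chain r n)"
  shows "length ts = Suc n \<and> set ts \<subseteq> {1..length ts}"
  using assms
proof (induction n arbitrary: ts)
  case 0
  then show ?case by simp
next
  case (Suc n)
  then obtain ts0 i b where ts0: "ts0 \<in> set_pmf (yule_chain r n)" and "i < length ts0"
    and ts: "ts = ts0 @ [if b then length ts0 + 1 else ts0 ! i]"
    by (auto simp: yule_step_def set_pmf_of_set)
  then have "ts0 ! i \<in> set ts0" by simp
  with Suc.IH[OF ts0] ts show ?case by force
qed

lemma abs_Xfrac_le_1: "\<bar>Xfrac k ts\<bar> \<le> 1"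
  by (cases "ts = []") (auto simp: Xfrac_def divide_le_eq_1 length_filter_le)

lemma Xfrac_snoc:
  "Xfrac k (ts @ [t])
     = (length (filter (\<lambda>t. 1 \<le> t \<and> t \<le> k) ts) + of_bool (1 \<le> t \<and> t \<le> k)) / (length ts + 1)"
  by (simp add: Xfrac_def)

lemma expectation_Xfrac_yule_step:
  assumes "0 \<le> r" "r \<le> 1" "ts \<noteq> []" "k \<le> length ts"
  shows "measure_pmf.expectation (yule_step r ts) (Xfrac k)
           = Xfrac k ts * (1 - r / real (length ts + 1))"
proof -
  define P where "P = (\<lambda>t. 1 \<le> t \<and> t \<le> k)"
  define L where "L = length ts"
  define c where "c = length (filter P ts)"
  have L: "real L > 0"
    using assms(3) by (simp add: L_def)
  have count: "(\<Sum>i<L. of_bool (P (ts ! i))) = real c"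
    by (simp add: c_def L_def length_filter_conv_card lessThan_def Collect_conj_eq Int_commute)
  have snoc: "Xfrac k (ts @ [t]) = (c + of_bool (P t)) / (L + 1)" for t
    by (simp add: Xfrac_snoc P_def c_def L_def)
  have "\<not> P (L + 1)"
    using assms(4) by (simp add: P_def L_def)
  then have newborn: "r * Xfrac k (ts @ [L + 1]) + (1 - r) * Xfrac k (ts @ [t])
      = (c + (1 - r) * of_bool (P t)) / (L + 1)" for t
    unfolding snoc by (simp add: add_divide_distrib[symmetric] algebra_simps)
  have "measure_pmf.expectation (yule_step r ts) (Xfrac k)
      = (\<Sum>i<L. (r * Xfrac k (ts @ [L + 1]) + (1 - r) * Xfrac k (ts @ [ts ! i])) / L)"
    unfolding yule_step_def L_def
    by (subst pmf_expectation_bind_pmf_of_set)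
       (use assms in \<open>auto simp: lessThan_atLeast0 map_pmf_def[symmetric]
                                  divide_inverse_commute mult.commute\<close>)
  also have "\<dots> = (\<Sum>i<L. c + (1 - r) * of_bool (P (ts ! i))) / (L + 1) / L"
    unfolding newborn by (simp add: sum_divide_distrib)
  also have "\<dots> = (L * c + (1 - r) * c) / (L + 1) / L"
    by (simp add: sum.distrib sum_distrib_left[symmetric] count)
  also have "\<dots> = Xfrac k ts * (1 - r / real (L + 1))"
    using L by (simp add: Xfrac_def c_def P_def L_def field_simps)
  finally show ?thesis by (simp add: L_def)
qed

lemma expectation_Xfrac_yule_chain_all_types:
  "measure_pmf.expectation (yule_chain r n) (Xfrac (Suc n)) = 1"
proof -
  have "AE ts in yule_chain r n. Xfrac (Suc n) ts = 1"
  proof (rule AE_pmfI)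
    fix ts assume "ts \<in> set_pmf (yule_chain r n)"
    from set_pmf_yule_chain[OF this] have "length ts = Suc n" "set ts \<subseteq> {1..Suc n}"
      by auto
    then show "Xfrac (Suc n) ts = 1"
      by (auto simp: Xfrac_def filter_True subset_iff)
  qed
  then show ?thesis
    by (simp add: integral_cong_AE[where g = "\<lambda>_. 1"])
qed

lemma expectation_Xfrac_yule_chain:
  assumes "0 \<le> r" "r \<le> 1" "1 \<le> k" "k \<le> Suc n"
  shows "measure_pmf.expectation (yule_chain r n) (Xfrac k) = (\<Prod>j\<in>{k+1..Suc n}. 1 - r / real j)"
  using assms(4)
proof (induction n)
  case 0
  with assms(3) have "k = 1"
    by simp
  then show ?case
    using expectation_Xfrac_yule_chain_all_types[of r 0] by simp
next
  case (Suc n)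
  show ?case
  proof (cases "k = Suc (Suc n)")
    case True
    then show ?thesis
      using expectation_Xfrac_yule_chain_all_types[of r "Suc n"] by simp
  next
    case False
    then have k: "k \<le> Suc n"
      using Suc.prems by simp
    have step: "measure_pmf.expectation (yule_step r ts) (Xfrac k)
        = Xfrac k ts * (1 - r / real (Suc (Suc n)))"
      if "ts \<in> set_pmf (yule_chain r n)" for ts
      using expectation_Xfrac_yule_step[OF assms(1,2), of ts k] set_pmf_yule_chain[OF that] k
      by force
    have "measure_pmf.expectation (yule_chain r (Suc n)) (Xfrac k)
        = measure_pmf.expectation (yule_chain r n)
            (\<lambda>ts. measure_pmf.expectation (yule_step r ts) (Xfrac k))"
      by (simp add: integral_bind_pmf_bounded[OF abs_Xfrac_le_1])
    also have "\<dots> = measure_pmf.expectation (yule_chain r n) (Xfrac k)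
        * (1 - r / real (Suc (Suc n)))"
      by (simp add: integral_cong_AE[OF _ _ AE_pmfI[OF step]])
    also have "\<dots> = (\<Prod>j\<in>{k+1..Suc (Suc n)}. 1 - r / real j)"
      using k by (simp add: Suc.IH prod.nat_ivl_Suc')
    finally show ?thesis .
  qed
qed

lemma has_integral_one_minus_power:
  "((\<lambda>x::real. (1 - x) ^ m) has_integral 1 / (m + 1)) {0..1}"
proof -
  define F :: "real \<Rightarrow> real" where "F x = - ((1 - x) ^ Suc m) / Suc m" for x
  have "((\<lambda>x. (1 - x) ^ m) has_integral F 1 - F 0) {0..1}"
  proof (rule fundamental_theorem_of_calculus)
    show "(F has_vector_derivative (1 - x) ^ m) (at x within {0..1})" for x
      unfolding F_def has_real_derivative_iff_has_vector_derivative[symmetric]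
      by (auto intro!: derivative_eq_intros DERIV_pow simp del: power_Suc)
  qed simp
  then show ?thesis
    by (simp add: F_def add.commute)
qed

lemma nn_integral_beta1_one_minus_power:
  assumes "2 \<le> j"
  shows "(\<integral>\<^sup>+x. ennreal ((1 - x) ^ m) \<partial>beta1 j) = ennreal ((real j - 1) / (real j - 1 + m))"
proof -
  define d where "d = j - 2"
  with assms have j: "j = d + 2"
    by simp
  have density: "ennreal (indicator {0..1} x * (real j - 1) * (1 - x) ^ (j - 2))
                   * ennreal ((1 - x) ^ m)
      = ennreal (indicator {0..1} x * ((real d + 1) * (1 - x) ^ (d + m)))" for x :: real
    by (cases "x \<in> {0..1}") (auto simp: j ennreal_mult[symmetric] power_add)
  have "((\<lambda>x::real. (real d + 1) * (1 - x) ^ (d + m))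
          has_integral (real d + 1) * (1 / (real (d + m) + 1))) {0..1}"
    by (intro has_integral_mult_right has_integral_one_minus_power)
  then have "(\<integral>\<^sup>+x. ennreal (indicator {0..1} x * ((real d + 1) * (1 - x) ^ (d + m))) \<partial>lborel)
      = ennreal ((real d + 1) * (1 / (real (d + m) + 1)))"
    by (intro nn_integral_has_integral_lebesgue) auto
  then have "(\<integral>\<^sup>+x. ennreal (indicator {0..1} x * (real j - 1) * (1 - x) ^ (j - 2))
                    * ennreal ((1 - x) ^ m) \<partial>lborel)
      = ennreal ((real d + 1) * (1 / (real (d + m) + 1)))"
    by (simp only: density)
  then show ?thesis
    by (simp add: beta1_def nn_integral_density j add_ac)
qed

lemma prob_space_beta1:
  assumes "2 \<le> j"
  shows "prob_space (beta1 j)"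
proof
  show "emeasure (beta1 j) (space (beta1 j)) = 1"
    using nn_integral_beta1_one_minus_power[OF assms, of 0] assms
    by (simp flip: nn_integral_indicator)
qed

lemma AE_beta1: "AE x in beta1 j. 0 \<le> x \<and> x \<le> 1"
  unfolding beta1_def by (subst AE_density) (auto split: split_indicator)

lemma sets_beta1 [simp, measurable_cong]: "sets (beta1 j) = sets borel"
  by (simp add: beta1_def)

lemma sets_W_law [simp, measurable_cong]: "sets (W_law r j) = sets borel"
  by (simp add: W_law_def)

lemma nn_integral_W_law:
  assumes "2 \<le> j" "0 \<le> r" "r \<le> 1" and [measurable]: "g \<in> borel_measurable borel"
  shows "(\<integral>\<^sup>+w. g w \<partial>W_law r j) = ennreal r * (\<integral>\<^sup>+x. g x \<partial>beta1 j) + ennreal (1 - r) * g 0"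
proof -
  interpret beta: prob_space "beta1 j"
    using assms(1) by (rule prob_space_beta1)
  have "(\<integral>\<^sup>+w. g w \<partial>W_law r j)
      = (\<integral>\<^sup>+(b, x). g (if b then x else 0) \<partial>(bernoulli_pmf r \<Otimes>\<^sub>M beta1 j))"
    unfolding W_law_def by (subst nn_integral_distr) (simp_all add: split_beta')
  also have "\<dots> = (\<integral>\<^sup>+b. \<integral>\<^sup>+x. g (if b then x else 0) \<partial>beta1 j \<partial>bernoulli_pmf r)"
    by (subst beta.nn_integral_fst[symmetric]) auto
  finally show ?thesis
    using assms(2,3) by (simp add: beta.emeasure_space_1 mult.commute)
qed

lemma prob_space_W_law:
  assumes "2 \<le> j" "0 \<le> r" "r \<le> 1"
  shows "prob_space (W_law r j)"
proof
  interpret beta: prob_space "beta1 j"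
    using assms(1) by (rule prob_space_beta1)
  show "emeasure (W_law r j) (space (W_law r j)) = 1"
    using nn_integral_W_law[OF assms, of "\<lambda>_. 1"] assms(2,3)
    by (simp add: beta.emeasure_space_1 flip: ennreal_plus)
qed

lemma AE_W_law_le_1:
  assumes "2 \<le> j" "0 \<le> r" "r \<le> 1"
  shows "AE w in W_law r j. w \<le> 1"
proof -
  have "AE x in beta1 j. x \<notin> {1<..}"
    using AE_beta1[of j] by eventually_elim auto
  then have "{1<..} \<in> null_sets (beta1 j)"
    by (subst AE_iff_null_sets) auto
  then have "emeasure (W_law r j) {1<..} = 0"
    using nn_integral_W_law[OF assms, of "indicator {1<..}"] by (simp add: null_setsD1)
  then have "{1<..} \<in> null_sets (W_law r j)"
    by auto
  then show ?thesis
    by (rule AE_not_in[THEN eventually_mono]) simp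
qed

lemma has_bochner_integral_W_law_one_minus:
  assumes "2 \<le> j" "0 \<le> r" "r \<le> 1"
  shows "has_bochner_integral (W_law r j) (\<lambda>w. 1 - w) (1 - r / real j)"
proof (rule has_bochner_integral_nn_integral)
  show "AE w in W_law r j. 0 \<le> 1 - w"
    using AE_W_law_le_1[OF assms] by eventually_elim simp
  show "0 \<le> 1 - r / real j"
    using assms by (simp add: field_simps)
  have "(\<integral>\<^sup>+w. ennreal (1 - w) \<partial>W_law r j)
      = ennreal r * ennreal ((real j - 1) / real j) + ennreal (1 - r)"
    using assms nn_integral_beta1_one_minus_power[OF assms(1), of 1] by (simp add: nn_integral_W_law)
  also have "\<dots> = ennreal (r * ((real j - 1) / real j) + (1 - r))"
    using assms by (simp flip: ennreal_mult ennreal_plus)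
  also have "r * ((real j - 1) / real j) + (1 - r) = 1 - r / real j"
    using assms(1) by (simp add: field_simps)
  finally show "(\<integral>\<^sup>+w. ennreal (1 - w) \<partial>W_law r j) = ennreal (1 - r / real j)" .
qed simp

lemma integral_Yprod_W_joint:
  assumes "0 \<le> r" "r \<le> 1" "1 \<le> k"
  shows "(\<integral>w. Yprod k N w \<partial>W_joint r k N) = (\<Prod>j\<in>{k+1..N}. 1 - r / real j)"
proof -
  \<comment> \<open>\<open>W_law r j\<close> is the zero measure for \<open>j < 2\<close>, and the product lemma needs every factor
    to be a probability space.\<close>
  define M where "M j = (if 2 \<le> j then W_law r j else return borel 0)" for j
  interpret product_prob_space M
    using prob_space_W_law[OF _ assms(1,2)]
    by (intro product_prob_spaceI) (simp add: M_def prob_space_return)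
  have M: "M j = W_law r j" if "j \<in> {k+1..N}" for j
    using that assms(3) by (simp add: M_def)
  then have "W_joint r k N = Pi\<^sub>M {k+1..N} M"
    unfolding W_joint_def by (intro PiM_cong) simp_all
  then have "(\<integral>w. Yprod k N w \<partial>W_joint r k N)
      = (\<integral>w. (\<Prod>j\<in>{k+1..N}. 1 - w j) \<partial>Pi\<^sub>M {k+1..N} M)"
    by (simp add: Yprod_def)
  also have "\<dots> = (\<Prod>j\<in>{k+1..N}. \<integral>w. 1 - w \<partial>M j)"
    using has_bochner_integral_W_law_one_minus[OF _ assms(1,2)] assms(3)
    by (intro product_integral_prod) (auto simp: M has_bochner_integral_iff)
  also have "\<dots> = (\<Prod>j\<in>{k+1..N}. 1 - r / real j)"
    using has_bochner_integral_W_law_one_minus[OF _ assms(1,2)] assms(3)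
    by (intro prod.cong) (auto simp: M has_bochner_integral_iff)
  finally show ?thesis .
qed

theorem lemma3p1:
  fixes r :: real and N k :: nat
  assumes "0 < r" "r < 1" "1 \<le> N" "1 \<le> k" "k \<le> N"
  shows "measure_pmf.expectation (yule_at r N) (Xfrac k)
           = (\<integral>w. Yprod k N w \<partial>(W_joint r k N))
       \<and> (\<integral>w. Yprod k N w \<partial>(W_joint r k N))
           = (\<Prod>j\<in>{k+1..N}. 1 - r / real j)"
proof -
  have "measure_pmf.expectation (yule_at r N) (Xfrac k) = (\<Prod>j\<in>{k+1..N}. 1 - r / real j)"
    using expectation_Xfrac_yule_chain[of r k "N - 1"] assms by (simp add: yule_at_def)
  moreover have "(\<integral>w. Yprod k N w \<partial>W_joint r k N) = (\<Prod>j\<in>{k+1..N}. 1 - r / real j)"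
    using integral_Yprod_W_joint[of r k N] assms by simp
  ultimately show ?thesis
    by simp
qed

end
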